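(* Let $\mathbf{O}\,\dot\cup\,\mathbf{S}$ be a finite set of categorical variables, $\mathcal{G}$ a DAG over $\mathbf{O}\cup\mathbf{S}$, $\hat{\mathbf{s}}$ a fixed value of $\mathbf{S}$, and $\mathcal{G}'$ the subgraph of $\mathcal{G}$ obtained by removing all edges out of nodes in $\mathbf{S}$. Then $\mathbf{BN}(\mathcal{G}')[^{\mathbf{S}=\hat{\mathbf{s}}}=\mathbf{BN}(\mathcal{G})[^{\mathbf{S}=\hat{\mathbf{s}}}$.
   Context: $\mathbf{BN}(\mathcal{G})$ is the set of distributions $P$ over the nodes of DAG $\mathcal{G}$ satisfying the Markov condition: each variable is independent of its non-descendants that are not parents, given its parents (equivalently, $p(\mathbf{x})=\prod_X p(x\mid \mathrm{pa}_{\mathcal{G}}(X))$). For a model $\mathbf{M}$ over $\mathbf{O}\cup\mathbf{S}$, $\mathbf{M}[^{\mathbf{S}=\hat{\mathbf{s}}}$ (selection) is the set of distributions $Q$ over $\mathbf{O}$ such that there is $P\in\mathbf{M}$ with $p(\hat{\mathbf{s}})>0$ and $q(\mathbf{o})=p(\mathbf{o}\mid\hat{\mathbf{s}})$ for all $\mathbf{o}$. *)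

theory Defs
  imports Complex_Main "HOL-Library.FuncSet"
begin

text \<open>Variables have type 'v; every variable X has a finite nonempty set of
categories D X (values of type 'a). A joint assignment to a variable set V is
an element of PiE V D.\<close>

definition is_dist :: "'v set \<Rightarrow> ('v \<Rightarrow> 'a set) \<Rightarrow> (('v \<Rightarrow> 'a) \<Rightarrow> real) \<Rightarrow> bool" where
  "is_dist V D P \<longleftrightarrow> (\<forall>x. P x \<ge> 0) \<and> (\<forall>x. x \<notin> PiE V D \<longrightarrow> P x = 0)
     \<and> sum P (PiE V D) = 1"

text \<open>Marginal probability p(x_A) of the values that x assigns to A.\<close>
definition marg :: "'v set \<Rightarrow> ('v \<Rightarrow> 'a set) \<Rightarrow> (('v \<Rightarrow> 'a) \<Rightarrow> real) \<Rightarrow> 'v set \<Rightarrow> ('v \<Rightarrow> 'a) \<Rightarrow> real" where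
  "marg V D P A x = sum P {y \<in> PiE V D. \<forall>a\<in>A. y a = x a}"

definition parents :: "('v \<times> 'v) set \<Rightarrow> 'v \<Rightarrow> 'v set" where
  "parents E X = {Y. (Y, X) \<in> E}"

definition is_DAG :: "'v set \<Rightarrow> ('v \<times> 'v) set \<Rightarrow> bool" where
  "is_DAG V E \<longleftrightarrow> E \<subseteq> V \<times> V \<and> acyclic E"

text \<open>BN(G): distributions with p(x) = prod_X p(x_X | x_pa(X)), where the
conditional is the ratio of marginals (if p(x_pa(X)) = 0 the factor is 0,
and so is p(x)).\<close>
definition BN :: "'v set \<Rightarrow> ('v \<Rightarrow> 'a set) \<Rightarrow> ('v \<times> 'v) set \<Rightarrow> (('v \<Rightarrow> 'a) \<Rightarrow> real) set" where
  "BN V D E = {P. is_dist V D P \<and>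
     (\<forall>x\<in>PiE V D. P x = (\<Prod>X\<in>V. marg V D P (insert X (parents E X)) x / marg V D P (parents E X) x))}"

definition merge :: "'v set \<Rightarrow> ('v \<Rightarrow> 'a) \<Rightarrow> ('v \<Rightarrow> 'a) \<Rightarrow> ('v \<Rightarrow> 'a)" where
  "merge Ov a s = (\<lambda>X. if X \<in> Ov then a X else s X)"

text \<open>Selection M[^{S = shat}: distributions Q over O with q(o) = p(o | shat).\<close>
definition selection :: "'v set \<Rightarrow> 'v set \<Rightarrow> ('v \<Rightarrow> 'a set) \<Rightarrow> (('v \<Rightarrow> 'a) \<Rightarrow> real) set
     \<Rightarrow> ('v \<Rightarrow> 'a) \<Rightarrow> (('v \<Rightarrow> 'a) \<Rightarrow> real) set" where
  "selection Ov Sv D M shat = {Q. \<exists>P\<in>M. marg (Ov \<union> Sv) D P Sv shat > 0 \<and>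
     (\<forall>a. Q a = (if a \<in> PiE Ov D then P (merge Ov a shat) / marg (Ov \<union> Sv) D P Sv shat else 0))}"

end

theory Submission
  imports Defs
begin

text \<open>
Every member of BN(G) is the product of conditional probability tables k X, where k X reads only
X and its parents; conversely every such product lies in BN(G), because in a product the conditional
of X given its parents is exactly k X (sum out the non-ancestral variables from the sinks upward).
Removing the edges out of S keeps a table family valid, so BN(G') \<subseteq> BN(G). Conversely, given
tables for G, freeze the S-inputs of every table at shat: the new tables are valid for G'
and their product agrees with the old one wherever S = shat, which is all that the selection sees.
\<close>

definition depends_only_on :: "'v set \<Rightarrow> (('v \<Rightarrow> 'a) \<Rightarrow> 'b) \<Rightarrow> bool" where
  "depends_only_on B f \<longleftrightarrow> (\<forall>x y. (\<forall>v\<in>B. x v = y v) \<longrightarrow> f x = f y)"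

definition cpt_family :: "'v set \<Rightarrow> ('v \<Rightarrow> 'a set) \<Rightarrow> ('v \<times> 'v) set
    \<Rightarrow> ('v \<Rightarrow> ('v \<Rightarrow> 'a) \<Rightarrow> real) \<Rightarrow> bool" where
  "cpt_family V D E k \<longleftrightarrow> (\<forall>X\<in>V. (\<forall>x. k X x \<ge> 0) \<and> depends_only_on (insert X (parents E X)) (k X)
      \<and> (\<forall>x. (\<Sum>d\<in>D X. k X (x(X := d))) = 1))"

definition bn_product :: "'v set \<Rightarrow> ('v \<Rightarrow> 'a set) \<Rightarrow> ('v \<Rightarrow> ('v \<Rightarrow> 'a) \<Rightarrow> real) \<Rightarrow> ('v \<Rightarrow> 'a) \<Rightarrow> real" where
  "bn_product V D k x = (if x \<in> PiE V D then (\<Prod>X\<in>V. k X x) else 0)"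

definition parent_closed :: "'v set \<Rightarrow> ('v \<times> 'v) set \<Rightarrow> 'v set \<Rightarrow> bool" where
  "parent_closed V E A \<longleftrightarrow> A \<subseteq> V \<and> (\<forall>Y\<in>A. parents E Y \<subseteq> A)"

lemma depends_only_onD: "depends_only_on B f \<Longrightarrow> (\<And>v. v \<in> B \<Longrightarrow> x v = y v) \<Longrightarrow> f x = f y"
  unfolding depends_only_on_def by blast

lemma depends_only_on_mono: "depends_only_on A f \<Longrightarrow> A \<subseteq> B \<Longrightarrow> depends_only_on B f"
  unfolding depends_only_on_def by blast

lemma sum_PiE_insert:
  assumes "Z \<notin> A"
  shows "sum f (PiE (insert Z A) D) = (\<Sum>y\<in>PiE A D. \<Sum>d\<in>D Z. f (y(Z := d)))"
proof -
  have "sum f (PiE (insert Z A) D) = sum (f \<circ> (\<lambda>(d, y). y(Z := d))) (D Z \<times> PiE A D)"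
    unfolding PiE_insert_eq by (rule sum.reindex[OF inj_combinator[OF assms]])
  also have "\<dots> = (\<Sum>d\<in>D Z. \<Sum>y\<in>PiE A D. f (y(Z := d)))"
    by (simp add: sum.cartesian_product split_def)
  also have "\<dots> = (\<Sum>y\<in>PiE A D. \<Sum>d\<in>D Z. f (y(Z := d)))"
    by (rule sum.swap)
  finally show ?thesis .
qed

lemma marg_depends_only_on: "depends_only_on B (marg V D P B)"
  unfolding depends_only_on_def marg_def by simp

lemma marg_nonneg: "\<forall>x. P x \<ge> 0 \<Longrightarrow> marg V D P B x \<ge> 0"
  unfolding marg_def by (simp add: sum_nonneg)

lemma le_marg:
  assumes "\<forall>x. P x \<ge> 0" "x \<in> PiE V D" "finite V" "\<forall>X\<in>V. finite (D X)"
  shows "P x \<le> marg V D P B x"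
  unfolding marg_def using assms by (intro member_le_sum) (auto intro: finite_subset[OF _ finite_PiE])

lemma sum_marg_insert:
  assumes "X \<in> V" "X \<notin> B" "finite V" "\<forall>X\<in>V. finite (D X)"
  shows "(\<Sum>d\<in>D X. marg V D P (insert X B) (x(X := d))) = marg V D P B x"
proof -
  let ?S = "{y \<in> PiE V D. \<forall>a\<in>B. y a = x a}"
  have "finite ?S"
    using assms(3,4) by (auto intro: finite_subset[OF _ finite_PiE])
  then have "(\<Sum>d\<in>D X. sum P {y \<in> ?S. y X = d}) = sum P ?S"
    by (rule sum.group) (use assms in \<open>auto simp: PiE_iff\<close>)
  moreover have "marg V D P (insert X B) (x(X := d)) = sum P {y \<in> ?S. y X = d}" for d
    unfolding marg_def using assms(2) by (intro sum.cong) auto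
  ultimately show ?thesis
    unfolding marg_def[of V D P B] by simp
qed

lemma marg_eq_0_imp_eq_0:
  assumes "is_dist V D P" "finite V" "\<forall>X\<in>V. finite (D X)" "marg V D P B x = 0"
  shows "P x = 0"
proof (cases "x \<in> PiE V D")
  case True
  then show ?thesis
    using assms le_marg[of P x V D B] marg_nonneg unfolding is_dist_def by (metis order_antisym)
next
  case False
  then show ?thesis
    using assms(1) unfolding is_dist_def by blast
qed

context
  fixes V :: "'v set" and D :: "'v \<Rightarrow> 'a set" and E :: "('v \<times> 'v) set"
    and k :: "'v \<Rightarrow> ('v \<Rightarrow> 'a) \<Rightarrow> real"
  assumes finite_V: "finite V" and finite_D: "\<forall>X\<in>V. finite (D X) \<and> D X \<noteq> {}"
    and dag: "is_DAG V E" and cpt: "cpt_family V D E k"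
begin

lemma cpt_nonneg: "X \<in> V \<Longrightarrow> k X x \<ge> 0"
  using cpt unfolding cpt_family_def by blast

lemma cpt_local:
  assumes "X \<in> V" "\<And>v. v \<in> insert X (parents E X) \<Longrightarrow> x v = y v"
  shows "k X x = k X y"
proof (rule depends_only_onD[OF _ assms(2)])
  show "depends_only_on (insert X (parents E X)) (k X)"
    using cpt assms(1) unfolding cpt_family_def by blast
qed

lemma cpt_sum_one: "X \<in> V \<Longrightarrow> (\<Sum>d\<in>D X. k X (x(X := d))) = 1"
  using cpt unfolding cpt_family_def by blast

lemma cpt_update_nonparent:
  assumes "parent_closed V E A" "Y \<in> A" "Z \<notin> A"
  shows "k Y (y(Z := d)) = k Y y"
  using assms unfolding parent_closed_def by (intro cpt_local) auto

lemma sum_prod_cpt_insert: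
  assumes A: "parent_closed V E A" and Z: "Z \<in> V" "Z \<notin> A" and h: "depends_only_on A h"
  shows "(\<Sum>y\<in>PiE (insert Z A) D. h y * (\<Prod>Y\<in>insert Z A. k Y y))
       = (\<Sum>y\<in>PiE A D. h y * (\<Prod>Y\<in>A. k Y y))"
proof -
  have finite_A: "finite A"
    using A finite_V unfolding parent_closed_def by (meson finite_subset)
  have "(\<Sum>d\<in>D Z. h (y(Z := d)) * (\<Prod>Y\<in>insert Z A. k Y (y(Z := d))))
      = h y * (\<Prod>Y\<in>A. k Y y) * (\<Sum>d\<in>D Z. k Z (y(Z := d)))" for y
  proof -
    have "h (y(Z := d)) = h y" for d
      using h Z by (intro depends_only_onD[OF h]) auto
    moreover have "(\<Prod>Y\<in>A. k Y (y(Z := d))) = (\<Prod>Y\<in>A. k Y y)" for d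
      using cpt_update_nonparent[OF A _ Z(2)] by (intro prod.cong) auto
    ultimately show ?thesis
      by (simp add: prod.insert[OF finite_A Z(2)] sum_distrib_left mult_ac)
  qed
  then show ?thesis
    by (simp add: sum_PiE_insert[OF Z(2)] cpt_sum_one[OF Z(1)])
qed

lemma sum_bn_product_parent_closed:
  assumes "parent_closed V E A" "depends_only_on A h"
  shows "(\<Sum>y\<in>PiE V D. h y * bn_product V D k y) = (\<Sum>y\<in>PiE A D. h y * (\<Prod>Y\<in>A. k Y y))"
  using assms
proof (induction "card (V - A)" arbitrary: A rule: less_induct)
  case less
  show ?case
  proof (cases "A = V")
    case True
    then show ?thesis by (auto simp: bn_product_def intro: sum.cong)
  next
    case False
    then have "V - A \<noteq> {}"
      using less.prems unfolding parent_closed_def by auto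
    moreover have "wf E"
      using dag finite_V unfolding is_DAG_def
      by (meson finite_SigmaI finite_acyclic_wf finite_subset)
    ultimately obtain Z where Z: "Z \<in> V - A" and minimal: "\<And>Q. (Q, Z) \<in> E \<Longrightarrow> Q \<notin> V - A"
      using wfE_min' by metis
    have "parents E Z \<subseteq> A"
      using minimal dag unfolding parents_def is_DAG_def by auto
    then have closed: "parent_closed V E (insert Z A)"
      using less.prems(1) Z unfolding parent_closed_def by auto
    have "card (V - insert Z A) < card (V - A)"
      using Z finite_V by (metis Diff_insert card_Diff1_less finite_Diff)
    moreover have "depends_only_on (insert Z A) h"
      using less.prems(2) by (rule depends_only_on_mono) auto
    ultimately have "(\<Sum>y\<in>PiE V D. h y * bn_product V D k y)
        = (\<Sum>y\<in>PiE (insert Z A) D. h y * (\<Prod>Y\<in>insert Z A. k Y y))"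
      using less.hyps closed by blast
    also have "\<dots> = (\<Sum>y\<in>PiE A D. h y * (\<Prod>Y\<in>A. k Y y))"
      using Z by (intro sum_prod_cpt_insert[OF less.prems(1) _ _ less.prems(2)]) auto
    finally show ?thesis .
  qed
qed

lemma marg_bn_product:
  assumes "parent_closed V E A" "B \<subseteq> A"
  shows "marg V D (bn_product V D k) B x
       = (\<Sum>y\<in>PiE A D. of_bool (\<forall>a\<in>B. y a = x a) * (\<Prod>Y\<in>A. k Y y))"
proof -
  have "finite (PiE V D)"
    using finite_V finite_D by (intro finite_PiE) auto
  then have "marg V D (bn_product V D k) B x
      = (\<Sum>y\<in>PiE V D. of_bool (\<forall>a\<in>B. y a = x a) * bn_product V D k y)"
    unfolding marg_def by (simp add: Int_def)
  also have "\<dots> = (\<Sum>y\<in>PiE A D. of_bool (\<forall>a\<in>B. y a = x a) * (\<Prod>Y\<in>A. k Y y))"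
    using assms(2) by (intro sum_bn_product_parent_closed[OF assms(1)])
      (auto simp: depends_only_on_def subset_iff)
  finally show ?thesis .
qed

lemma marg_bn_product_insert_parents:
  assumes X: "X \<in> V" "x X \<in> D X"
  shows "marg V D (bn_product V D k) (insert X (parents E X)) x
       = k X x * marg V D (bn_product V D k) (parents E X) x"
proof -
  let ?pa = "parents E X" and ?agree = "\<lambda>B y. of_bool (\<forall>a\<in>B. y a = x a) :: real"
  define W where "W = {Y \<in> V. (X, Y) \<notin> E\<^sup>+} - {X}"
  have not_cyclic: "(X, X) \<notin> E\<^sup>+" and E_V: "E \<subseteq> V \<times> V"
    using dag unfolding is_DAG_def acyclic_def by auto
  then have W: "parent_closed V E W" "parent_closed V E (insert X W)" "?pa \<subseteq> W" "X \<notin> W"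
    using X unfolding W_def parent_closed_def parents_def
    by (auto dest: trancl_into_trancl)
  have "X \<notin> ?pa"
    using not_cyclic unfolding parents_def by auto
  have finite_W: "finite W"
    unfolding W_def using finite_V by auto
  have summand: "(\<Sum>d\<in>D X. ?agree (insert X ?pa) (y(X := d)) * (\<Prod>Y\<in>insert X W. k Y (y(X := d))))
      = k X x * (?agree ?pa y * (\<Prod>Y\<in>W. k Y y))" for y
  proof -
    have "?agree (insert X ?pa) (y(X := d)) * (\<Prod>Y\<in>insert X W. k Y (y(X := d)))
        = of_bool (d = x X) * (k X x * (?agree ?pa y * (\<Prod>Y\<in>W. k Y y)))" for d
    proof -
      have "(\<Prod>Y\<in>insert X W. k Y (y(X := d))) = k X (y(X := d)) * (\<Prod>Y\<in>W. k Y y)"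
        using cpt_update_nonparent[OF W(1) _ W(4)] by (simp add: prod.insert[OF finite_W W(4)])
      moreover have "k X (y(X := x X)) = k X x" if "\<forall>a\<in>?pa. y a = x a"
        using X(1) that by (intro cpt_local) auto
      moreover have "(\<forall>a\<in>insert X ?pa. (y(X := d)) a = x a) \<longleftrightarrow> d = x X \<and> (\<forall>a\<in>?pa. y a = x a)"
        using \<open>X \<notin> ?pa\<close> by auto
      ultimately show ?thesis
        by auto
    qed
    then show ?thesis
      using X(2) finite_D X(1) by simp
  qed
  have "marg V D (bn_product V D k) (insert X ?pa) x
      = (\<Sum>y\<in>PiE (insert X W) D. ?agree (insert X ?pa) y * (\<Prod>Y\<in>insert X W. k Y y))"
    using W(2,3) by (intro marg_bn_product) auto
  also have "\<dots> = (\<Sum>y\<in>PiE W D. k X x * (?agree ?pa y * (\<Prod>Y\<in>W. k Y y)))"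
    unfolding sum_PiE_insert[OF W(4)] summand ..
  also have "\<dots> = k X x * marg V D (bn_product V D k) ?pa x"
    by (simp add: sum_distrib_left marg_bn_product[OF W(1,3)])
  finally show ?thesis .
qed

lemma bn_product_nonneg: "bn_product V D k x \<ge> 0"
  unfolding bn_product_def using cpt_nonneg by (auto intro: prod_nonneg)

lemma bn_product_is_dist: "is_dist V D (bn_product V D k)"
proof -
  have "(\<Sum>y\<in>PiE V D. 1 * bn_product V D k y) = (\<Sum>y\<in>PiE {} D. 1 * (\<Prod>Y\<in>{}. k Y y))"
    by (rule sum_bn_product_parent_closed) (auto simp: parent_closed_def depends_only_on_def)
  then show ?thesis
    unfolding is_dist_def using bn_product_nonneg by (auto simp: bn_product_def)
qed

lemma bn_product_in_BN: "bn_product V D k \<in> BN V D E"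
proof -
  let ?P = "bn_product V D k"
  have "?P x = (\<Prod>X\<in>V. marg V D ?P (insert X (parents E X)) x / marg V D ?P (parents E X) x)"
    if x: "x \<in> PiE V D" for x
  proof (cases "\<forall>X\<in>V. marg V D ?P (parents E X) x \<noteq> 0")
    case True
    then have "marg V D ?P (insert X (parents E X)) x / marg V D ?P (parents E X) x = k X x"
      if "X \<in> V" for X
      using that x by (simp add: marg_bn_product_insert_parents PiE_iff)
    then show ?thesis
      using x by (simp add: bn_product_def)
  next
    case False
    then obtain X where "X \<in> V" "marg V D ?P (parents E X) x = 0"
      by blast
    then show ?thesis
      using marg_eq_0_imp_eq_0[OF bn_product_is_dist finite_V] finite_D finite_V by auto
  qed
  then show ?thesis
    unfolding BN_def using bn_product_is_dist by auto
qed

end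

definition conditional_table :: "'v set \<Rightarrow> ('v \<Rightarrow> 'a set) \<Rightarrow> ('v \<times> 'v) set
    \<Rightarrow> (('v \<Rightarrow> 'a) \<Rightarrow> real) \<Rightarrow> 'v \<Rightarrow> ('v \<Rightarrow> 'a) \<Rightarrow> real" where
  "conditional_table V D E P X x = (if marg V D P (parents E X) x > 0
      then marg V D P (insert X (parents E X)) x / marg V D P (parents E X) x
      else 1 / real (card (D X)))"
  \<comment> \<open>The uniform fallback on null parent configurations only serves normalisation; any
    table would do there, since P vanishes on them.\<close>

lemma cpt_family_conditional_table:
  fixes P :: "('v \<Rightarrow> 'a) \<Rightarrow> real"
  assumes P: "is_dist V D P" and finite_V: "finite V"
    and finite_D: "\<forall>X\<in>V. finite (D X) \<and> D X \<noteq> {}" and no_loops: "\<forall>X\<in>V. X \<notin> parents E X"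
  shows "cpt_family V D E (conditional_table V D E P)"
  unfolding cpt_family_def
proof (intro ballI conjI allI)
  fix X x
  assume X: "X \<in> V"
  have P_nonneg: "\<forall>x. P x \<ge> 0"
    using P unfolding is_dist_def by blast
  show "conditional_table V D E P X x \<ge> 0"
    unfolding conditional_table_def using marg_nonneg[OF P_nonneg] by auto
  show "depends_only_on (insert X (parents E X)) (conditional_table V D E P X)"
    unfolding depends_only_on_def
  proof (intro allI impI)
    fix x y :: "'v \<Rightarrow> 'a"
    assume "\<forall>v\<in>insert X (parents E X). x v = y v"
    then have "marg V D P (parents E X) x = marg V D P (parents E X) y"
      and "marg V D P (insert X (parents E X)) x = marg V D P (insert X (parents E X)) y"
      by (auto intro: depends_only_onD[OF marg_depends_only_on])
    then show "conditional_table V D E P X x = conditional_table V D E P X y"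
      unfolding conditional_table_def by simp
  qed
  have unchanged: "marg V D P (parents E X) (x(X := d)) = marg V D P (parents E X) x" for d
    using no_loops X by (intro depends_only_onD[OF marg_depends_only_on]) auto
  show "(\<Sum>d\<in>D X. conditional_table V D E P X (x(X := d))) = 1"
  proof (cases "marg V D P (parents E X) x > 0")
    case True
    have "(\<Sum>d\<in>D X. marg V D P (insert X (parents E X)) (x(X := d)))
        = marg V D P (parents E X) x"
      using finite_D finite_V X no_loops by (intro sum_marg_insert) auto
    then show ?thesis
      using True unfolding conditional_table_def unchanged by (simp add: sum_divide_distrib[symmetric])
  next
    case False
    have "card (D X) > 0"
      using finite_D X by (simp add: card_gt_0_iff)
    then show ?thesis
      using False unfolding conditional_table_def unchanged by simp
  qed
qed

lemma BN_eq_bn_products: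
  assumes finite_V: "finite V" and finite_D: "\<forall>X\<in>V. finite (D X) \<and> D X \<noteq> {}"
    and dag: "is_DAG V E"
  shows "BN V D E = bn_product V D ` Collect (cpt_family V D E)"
proof
  show "bn_product V D ` Collect (cpt_family V D E) \<subseteq> BN V D E"
    using bn_product_in_BN[OF assms] by blast
next
  show "BN V D E \<subseteq> bn_product V D ` Collect (cpt_family V D E)"
  proof
    fix P
    assume "P \<in> BN V D E"
    then have P: "is_dist V D P" and factorizes: "\<And>x. x \<in> PiE V D \<Longrightarrow>
        P x = (\<Prod>X\<in>V. marg V D P (insert X (parents E X)) x / marg V D P (parents E X) x)"
      unfolding BN_def by auto
    let ?k = "conditional_table V D E P"
    have "\<forall>X\<in>V. X \<notin> parents E X"
      using dag unfolding is_DAG_def acyclic_def parents_def by auto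
    then have cpt: "cpt_family V D E ?k"
      using cpt_family_conditional_table[OF P finite_V finite_D] by blast
    have "P x \<le> bn_product V D ?k x" if "x \<in> PiE V D" for x
    proof (cases "\<forall>X\<in>V. marg V D P (parents E X) x > 0")
      case True
      then show ?thesis
        using that factorizes by (simp add: bn_product_def conditional_table_def)
    next
      case False
      then obtain X where "X \<in> V" "\<not> marg V D P (parents E X) x > 0"
        by blast
      moreover have "marg V D P (parents E X) x \<ge> 0"
        using P marg_nonneg unfolding is_dist_def by blast
      ultimately have "P x = 0"
        using finite_D finite_V by (intro marg_eq_0_imp_eq_0[OF P]) auto
      then show ?thesis
        using bn_product_nonneg[OF assms cpt] by simp
    qed
    moreover have "sum P (PiE V D) = sum (bn_product V D ?k) (PiE V D)"
      using P bn_product_is_dist[OF assms cpt] unfolding is_dist_def by simp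
    moreover have "finite (PiE V D)"
      using finite_V finite_D by (intro finite_PiE) auto
    ultimately have "P x = bn_product V D ?k x" for x
      using P sum_mono_inv[of P "PiE V D" "bn_product V D ?k" x]
      unfolding is_dist_def bn_product_def by (cases "x \<in> PiE V D") auto
    then show "P \<in> bn_product V D ` Collect (cpt_family V D E)"
      using cpt by blast
  qed
qed

lemma cpt_family_subgraph:
  assumes "E' \<subseteq> E" "cpt_family V D E' k"
  shows "cpt_family V D E k"
proof -
  have "insert X (parents E' X) \<subseteq> insert X (parents E X)" for X
    using assms(1) unfolding parents_def by auto
  then show ?thesis
    using assms(2) unfolding cpt_family_def by (meson depends_only_on_mono)
qed

lemma cpt_family_cut_edges_from:
  assumes cpt: "cpt_family V D E k"
  obtains k' where "cpt_family V D {(a, b) \<in> E. a \<notin> S} k'"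
    and "\<And>y. \<forall>v\<in>S. y v = s v \<Longrightarrow> bn_product V D k' y = bn_product V D k y"
proof
  \<comment> \<open>Every table reads its S-parents at the frozen value s; X itself is never frozen, so that
    the tables of selection variables stay normalised.\<close>
  define freeze where "freeze X y = (\<lambda>v. if v \<in> S - {X} then s v else y v)" for X y
  show "cpt_family V D {(a, b) \<in> E. a \<notin> S} (\<lambda>X y. k X (freeze X y))"
    unfolding cpt_family_def
  proof (intro ballI conjI allI)
    fix X y
    assume X: "X \<in> V"
    then have "\<forall>x. k X x \<ge> 0" and local: "depends_only_on (insert X (parents E X)) (k X)"
      and normalised: "\<forall>x. (\<Sum>d\<in>D X. k X (x(X := d))) = 1"
      using cpt unfolding cpt_family_def by blast+
    then show "k X (freeze X y) \<ge> 0"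
      by blast
    show "depends_only_on (insert X (parents {(a, b) \<in> E. a \<notin> S} X)) (\<lambda>y. k X (freeze X y))"
      unfolding depends_only_on_def
      by (auto simp: freeze_def parents_def intro!: depends_only_onD[OF local])
    have "freeze X (y(X := d)) = (freeze X y)(X := d)" for d
      unfolding freeze_def by auto
    then show "(\<Sum>d\<in>D X. k X (freeze X (y(X := d)))) = 1"
      using normalised by simp
  qed
  fix y
  assume "\<forall>v\<in>S. y v = s v"
  then have "freeze X y = y" for X
    unfolding freeze_def by auto
  then show "bn_product V D (\<lambda>X y. k X (freeze X y)) y = bn_product V D k y"
    unfolding bn_product_def by simp
qed

lemma selection_subset_if_agree:
  assumes "Ov \<inter> Sv = {}"
    and agree: "\<forall>P\<in>M. \<exists>P'\<in>M'. \<forall>y. (\<forall>v\<in>Sv. y v = s v) \<longrightarrow> P' y = P y"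
  shows "selection Ov Sv D M s \<subseteq> selection Ov Sv D M' s"
proof
  fix Q
  assume "Q \<in> selection Ov Sv D M s"
  then obtain P where "P \<in> M" and P: "marg (Ov \<union> Sv) D P Sv s > 0"
    "\<forall>a. Q a = (if a \<in> PiE Ov D then P (merge Ov a s) / marg (Ov \<union> Sv) D P Sv s else 0)"
    unfolding selection_def by blast
  then obtain P' where "P' \<in> M'" and P': "\<And>y. \<forall>v\<in>Sv. y v = s v \<Longrightarrow> P' y = P y"
    using agree by blast
  have "marg (Ov \<union> Sv) D P' Sv s = marg (Ov \<union> Sv) D P Sv s"
    unfolding marg_def using P' by (intro sum.cong) auto
  moreover have "P' (merge Ov a s) = P (merge Ov a s)" for a
    using assms(1) by (intro P') (auto simp: merge_def)
  ultimately show "Q \<in> selection Ov Sv D M' s"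
    unfolding selection_def using P by (intro CollectI bexI[OF _ \<open>P' \<in> M'\<close>]) auto
qed

lemma BN_subgraph:
  assumes "finite V" "\<forall>X\<in>V. finite (D X) \<and> D X \<noteq> {}" "is_DAG V E" "E' \<subseteq> E"
  shows "BN V D E' \<subseteq> BN V D E"
proof -
  have "is_DAG V E'"
    using assms(3,4) unfolding is_DAG_def by (auto intro: acyclic_subset)
  then show ?thesis
    unfolding BN_eq_bn_products[OF assms(1-3)] BN_eq_bn_products[OF assms(1,2) \<open>is_DAG V E'\<close>]
    using cpt_family_subgraph[OF assms(4)] by blast
qed

lemma BN_cut_edges_from:
  assumes "finite V" "\<forall>X\<in>V. finite (D X) \<and> D X \<noteq> {}" "is_DAG V E" "P \<in> BN V D E"
  shows "\<exists>P'\<in>BN V D {(a, b) \<in> E. a \<notin> S}. \<forall>y. (\<forall>v\<in>S. y v = s v) \<longrightarrow> P' y = P y"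
proof -
  have "is_DAG V {(a, b) \<in> E. a \<notin> S}"
    using assms(3) unfolding is_DAG_def by (auto intro: acyclic_subset)
  moreover obtain k where "cpt_family V D E k" "P = bn_product V D k"
    using assms BN_eq_bn_products by blast
  moreover obtain k' where "cpt_family V D {(a, b) \<in> E. a \<notin> S} k'"
    and "\<And>y. \<forall>v\<in>S. y v = s v \<Longrightarrow> bn_product V D k' y = bn_product V D k y"
    using cpt_family_cut_edges_from[OF \<open>cpt_family V D E k\<close>] by blast
  ultimately show ?thesis
    using assms(1,2) BN_eq_bn_products by blast
qed

theorem lemma3:
  fixes Ov Sv :: "'v set" and D :: "'v \<Rightarrow> 'a set" and E :: "('v \<times> 'v) set"
    and shat :: "'v \<Rightarrow> 'a"
  assumes "finite (Ov \<union> Sv)" and "Ov \<inter> Sv = {}"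
    and "\<forall>X\<in>Ov \<union> Sv. finite (D X) \<and> D X \<noteq> {}"
    and "is_DAG (Ov \<union> Sv) E"
    and "shat \<in> PiE Sv D"
  shows "selection Ov Sv D (BN (Ov \<union> Sv) D {(a, b) \<in> E. a \<notin> Sv}) shat
       = selection Ov Sv D (BN (Ov \<union> Sv) D E) shat"
proof
  have "BN (Ov \<union> Sv) D {(a, b) \<in> E. a \<notin> Sv} \<subseteq> BN (Ov \<union> Sv) D E"
    using assms(1,3,4) by (rule BN_subgraph) auto
  then show "selection Ov Sv D (BN (Ov \<union> Sv) D {(a, b) \<in> E. a \<notin> Sv}) shat
      \<subseteq> selection Ov Sv D (BN (Ov \<union> Sv) D E) shat"
    using assms(2) by (intro selection_subset_if_agree) auto
  show "selection Ov Sv D (BN (Ov \<union> Sv) D E) shat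
      \<subseteq> selection Ov Sv D (BN (Ov \<union> Sv) D {(a, b) \<in> E. a \<notin> Sv}) shat"
    using BN_cut_edges_from[OF assms(1,3,4)] by (intro selection_subset_if_agree[OF assms(2)]) blast
qed

end
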